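(* Let $\mathcal{F} \subseteq \{0,1\}^n$ be a feasible set, let $c \in \mathbb{Z}^n$, and let $\ell \in \mathbb{Z}_+$. Let $c' \in \mathbb{Z}^n$ be the $\ell$-bit rounding of $c$, and let $x^\star \in \mathcal{F}$ be an optimal solution of $\max\{(c')^\top x : x \in \mathcal{F}\}$. Then $x^\star$ is $\frac{1}{2^{\ell-1}}$-optimal with respect to the original objective $c$ for the problem $\max\{c^\top x : x \in \mathcal{F}\}$.
   Context: Consider the binary program $\max\{c^\top x : x \in \mathcal{F}\}$ with $\mathcal{F} \subseteq \{0,1\}^n$ and $c = (c_1,\dots,c_n)^\top \in \mathbb{Z}^n$. For each $i \in [n] = \{1,\dots,n\}$, write $c_i = \mathrm{sgn}(c_i) \sum_{j=0}^{k_i-1} c_{ij} 2^j$, where $\mathrm{sgn}(c_i) \in \{0,\pm 1\}$ is the sign of $c_i$, $k_i = \lceil \log_2(|c_i|+1) \rceil$, and $c_{ij} \in \{0,1\}$ are the binary digits of $|c_i|$. For $\ell \in \mathbb{Z}_+$, the $\ell$-bit rounding of $c_i$ is $c'_i = \mathrm{sgn}(c_i) \sum_{j = k_i-\ell}^{k_i-1} c_{ij} 2^j$, i.e., the lowest $k_i - \ell$ bits of $|c_i|$ are set to zero and the top $\ell$ bits are kept (the sum starts at $j = \max(0, k_i-\ell)$; if $\ell \ge k_i$, then $c'_i = c_i$). The $\ell$-bit rounding of $c$ is $c' = (c'_1,\dots,c'_n)^\top$. For $\varepsilon \ge 0$, a feasible point $x^\star \in \mathcal{F}$ is called $\varepsilon$-optimal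 for the objective function $c$ if there exists $\tilde c \in \mathbb{R}^n$ such that, for all $j \in [n]$, $(1-\varepsilon)c_j \le \tilde c_j \le (1+\varepsilon)c_j$ if $c_j \ge 0$, and $(1+\varepsilon)c_j \le \tilde c_j \le (1-\varepsilon)c_j$ if $c_j < 0$, and $x^\star$ is an optimal solution of $\max\{\tilde c^\top x : x \in \mathcal{F}\}$. *)

theory Defs
  imports Complex_Main
begin

text \<open>Vectors in Z^n / {0,1}^n are represented as functions nat => int; only the
  coordinates i < n matter.\<close>

definition binary_set :: "nat \<Rightarrow> (nat \<Rightarrow> int) set" where
  "binary_set n = {x. (\<forall>i<n. x i \<in> {0,1}) \<and> (\<forall>i\<ge>n. x i = 0)}"

definition bitlen :: "int \<Rightarrow> nat" where
  "bitlen c = nat \<lceil>log 2 (real_of_int \<bar>c\<bar> + 1)\<rceil>"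

definition bitdigit :: "int \<Rightarrow> nat \<Rightarrow> int" where
  "bitdigit c j = (\<bar>c\<bar> div 2 ^ j) mod 2"

text \<open>l-bit rounding of c: sgn(c) * sum_{j = max(0,k-l)}^{k-1} c_j 2^j
  (nat subtraction k - l realises max(0, k-l)).\<close>
definition bit_round :: "nat \<Rightarrow> int \<Rightarrow> int" where
  "bit_round l c = sgn c * (\<Sum>j\<in>{bitlen c - l..<bitlen c}. bitdigit c j * 2 ^ j)"

definition bit_round_vec :: "nat \<Rightarrow> (nat \<Rightarrow> int) \<Rightarrow> (nat \<Rightarrow> int)" where
  "bit_round_vec l c = (\<lambda>i. bit_round l (c i))"

definition optimal_sol :: "nat \<Rightarrow> (nat \<Rightarrow> int) set \<Rightarrow> (nat \<Rightarrow> real) \<Rightarrow> (nat \<Rightarrow> int) \<Rightarrow> bool" where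
  "optimal_sol n F w xs \<longleftrightarrow> xs \<in> F \<and>
     (\<forall>x\<in>F. (\<Sum>j<n. w j * real_of_int (x j)) \<le> (\<Sum>j<n. w j * real_of_int (xs j)))"

definition eps_optimal :: "nat \<Rightarrow> (nat \<Rightarrow> int) set \<Rightarrow> (nat \<Rightarrow> int) \<Rightarrow> real \<Rightarrow> (nat \<Rightarrow> int) \<Rightarrow> bool" where
  "eps_optimal n F c \<epsilon> xs \<longleftrightarrow> xs \<in> F \<and>
     (\<exists>ct :: nat \<Rightarrow> real.
        (\<forall>j<n. (c j \<ge> 0 \<longrightarrow> (1 - \<epsilon>) * c j \<le> ct j \<and> ct j \<le> (1 + \<epsilon>) * c j) \<and>
               (c j < 0 \<longrightarrow> (1 + \<epsilon>) * c j \<le> ct j \<and> ct j \<le> (1 - \<epsilon>) * c j))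
        \<and> optimal_sol n F ct xs)"

end

theory Submission
  imports Defs
begin

text \<open>The rounded objective c' itself witnesses \<open>\<epsilon>\<close>-optimality. If \<open>|c\<^sub>i|\<close> has
  \<open>k\<close> bits, rounding clears the lowest \<open>k - l\<close> of them, so it changes \<open>|c\<^sub>i|\<close> by less
  than \<open>2^(k-l) = 2^(k-1) / 2^(l-1) \<le> |c\<^sub>i| / 2^(l-1)\<close> and never changes the sign;
  hence c' lies in the \<open>\<epsilon>\<close>-box around c, and x* is optimal for c' by assumption.
  The argument does not use that the feasible set is binary.\<close>

lemma sum_binary_digits_eq_mod:
  fixes a :: int
  assumes "0 \<le> a"
  shows "(\<Sum>j<k. (a div 2 ^ j) mod 2 * 2 ^ j) = a mod 2 ^ k"
proof (induction k)
  case 0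
  then show ?case by simp
next
  case (Suc k)
  have "a mod (2 ^ k * 2) = 2 ^ k * (a div 2 ^ k mod 2) + a mod 2 ^ k"
    using mod_mult2_eq'[of a "2 ^ k" 2] by simp
  with Suc show ?case by (simp add: mult.commute)
qed

lemma bitlen_bounds:
  assumes "c \<noteq> 0"
  shows "1 \<le> bitlen c" "2 ^ (bitlen c - 1) \<le> \<bar>c\<bar>" "\<bar>c\<bar> < 2 ^ bitlen c"
proof -
  define L where "L = log 2 (real_of_int \<bar>c\<bar> + 1)"
  have abs_ge_1: "1 \<le> \<bar>c\<bar>" using assms by simp
  have power_L: "real_of_int \<bar>c\<bar> + 1 = 2 powr L"
    unfolding L_def using abs_ge_1 by simp
  have "0 < L" using abs_ge_1 unfolding L_def by simp
  then have ceiling_pos: "1 \<le> \<lceil>L\<rceil>" by (simp add: le_ceiling_iff)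
  then have real_bitlen: "real (bitlen c) = of_int \<lceil>L\<rceil>"
    unfolding bitlen_def L_def by simp
  show bitlen_pos: "1 \<le> bitlen c" using ceiling_pos real_bitlen by linarith
  have "real_of_int \<bar>c\<bar> + 1 \<le> 2 powr real (bitlen c)"
    unfolding power_L real_bitlen by (simp add: le_of_int_ceiling)
  then have "real_of_int (\<bar>c\<bar> + 1) \<le> real_of_int (2 ^ bitlen c)"
    by (simp add: powr_realpow)
  then show "\<bar>c\<bar> < 2 ^ bitlen c" by linarith
  have "real (bitlen c - 1) < L"
    using bitlen_pos real_bitlen ceiling_correct[of L] by (simp add: of_nat_diff)
  then have "2 powr real (bitlen c - 1) < real_of_int \<bar>c\<bar> + 1"
    unfolding power_L by simp
  then have "real_of_int (2 ^ (bitlen c - 1)) < real_of_int (\<bar>c\<bar> + 1)"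
    by (simp add: powr_realpow)
  then show "2 ^ (bitlen c - 1) \<le> \<bar>c\<bar>" by linarith
qed

lemma bit_round_eq_truncation:
  "bit_round l c = sgn c * (\<bar>c\<bar> - \<bar>c\<bar> mod 2 ^ (bitlen c - l))"
proof (cases "c = 0")
  case True
  then show ?thesis by (simp add: bit_round_def)
next
  case False
  let ?k = "bitlen c" and ?digit = "\<lambda>j. bitdigit c j * 2 ^ j"
  have "sum ?digit {0..<?k - l} + sum ?digit {?k - l..<?k} = sum ?digit {0..<?k}"
    by (rule sum.atLeastLessThan_concat) auto
  moreover have "sum ?digit {0..<?k} = \<bar>c\<bar>"
    using sum_binary_digits_eq_mod[of "\<bar>c\<bar>" ?k] bitlen_bounds(3)[OF False]
    by (simp add: bitdigit_def atLeast0LessThan)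
  moreover have "sum ?digit {0..<?k - l} = \<bar>c\<bar> mod 2 ^ (?k - l)"
    using sum_binary_digits_eq_mod[of "\<bar>c\<bar>" "?k - l"]
    by (simp add: bitdigit_def atLeast0LessThan)
  ultimately show ?thesis unfolding bit_round_def by simp
qed

lemma abs_diff_bit_round: "\<bar>c - bit_round l c\<bar> = \<bar>c\<bar> mod 2 ^ (bitlen c - l)"
proof -
  have "c - bit_round l c = sgn c * (\<bar>c\<bar> mod 2 ^ (bitlen c - l))"
    unfolding bit_round_eq_truncation by (simp add: right_diff_distrib sgn_mult_abs)
  then show ?thesis by (cases "c = 0") (simp_all add: abs_mult)
qed

lemma bit_round_error_scaled:
  assumes "1 \<le> l"
  shows "\<bar>c - bit_round l c\<bar> * 2 ^ (l - 1) \<le> \<bar>c\<bar>"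
proof (cases "c \<noteq> 0 \<and> l \<le> bitlen c")
  case True
  have "\<bar>c - bit_round l c\<bar> * 2 ^ (l - 1) < 2 ^ (bitlen c - l) * 2 ^ (l - 1)"
    unfolding abs_diff_bit_round by (simp add: mult_strict_right_mono)
  also have "\<dots> = 2 ^ (bitlen c - 1)"
    using True assms by (simp flip: power_add)
  also have "\<dots> \<le> \<bar>c\<bar>"
    using True bitlen_bounds(2) by blast
  finally show ?thesis by simp
next
  case False
  then have "c - bit_round l c = 0"
    using abs_diff_bit_round[of c l] by (auto simp: bit_round_def)
  then show ?thesis by simp
qed

lemma bit_round_relative_error:
  "\<bar>real_of_int c - real_of_int (bit_round l c)\<bar>
     \<le> 1 / 2 powr (real l - 1) * \<bar>real_of_int c\<bar>"
proof (cases "l = 0")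
  case True
  \<comment> \<open>the tolerance is then \<open>1 / 2 powr -1 = 2\<close>, so a trivial bound suffices\<close>
  have "\<bar>c - bit_round l c\<bar> \<le> \<bar>c\<bar>"
    unfolding abs_diff_bit_round by (simp add: zmod_le_nonneg_dividend)
  then have "\<bar>real_of_int c - real_of_int (bit_round l c)\<bar> \<le> \<bar>real_of_int c\<bar>"
    by (simp flip: of_int_diff of_int_abs)
  with True show ?thesis by (simp add: powr_minus_divide)
next
  case False
  have "real_of_int (\<bar>c - bit_round l c\<bar> * 2 ^ (l - 1)) \<le> real_of_int \<bar>c\<bar>"
    using bit_round_error_scaled[of l c] False by (simp only: of_int_le_iff not_less less_one)
  then have "\<bar>real_of_int c - real_of_int (bit_round l c)\<bar> * 2 ^ (l - 1) \<le> \<bar>real_of_int c\<bar>"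
    by simp
  moreover have "2 powr (real l - 1) = 2 ^ (l - 1)"
    using False by (simp add: of_nat_diff flip: powr_realpow)
  ultimately show ?thesis by (simp add: field_simps)
qed

lemma relative_error_imp_sign_bounds:
  fixes x y e :: real
  assumes "\<bar>x - y\<bar> \<le> e * \<bar>x\<bar>"
  shows "(0 \<le> x \<longrightarrow> (1 - e) * x \<le> y \<and> y \<le> (1 + e) * x) \<and>
         (x < 0 \<longrightarrow> (1 + e) * x \<le> y \<and> y \<le> (1 - e) * x)"
  using assms by (cases "0 \<le> x") (auto simp: algebra_simps abs_le_iff)

theorem lemma1:
  fixes n l :: nat and F :: "(nat \<Rightarrow> int) set" and c xs :: "nat \<Rightarrow> int"
  assumes "F \<subseteq> binary_set n"
    and "optimal_sol n F (\<lambda>j. real_of_int (bit_round_vec l c j)) xs"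
  shows "eps_optimal n F c (1 / 2 powr (real l - 1)) xs"
proof -
  define \<epsilon> where "\<epsilon> = 1 / 2 powr (real l - 1)"
  define ct where "ct = (\<lambda>j. real_of_int (bit_round_vec l c j))"
  have "xs \<in> F" using assms(2) unfolding optimal_sol_def by blast
  moreover have "optimal_sol n F ct xs" using assms(2) unfolding ct_def .
  moreover have "(0 \<le> c j \<longrightarrow> (1 - \<epsilon>) * c j \<le> ct j \<and> ct j \<le> (1 + \<epsilon>) * c j) \<and>
      (c j < 0 \<longrightarrow> (1 + \<epsilon>) * c j \<le> ct j \<and> ct j \<le> (1 - \<epsilon>) * c j)" for j
    unfolding \<epsilon>_def ct_def bit_round_vec_def
    using relative_error_imp_sign_bounds[OF bit_round_relative_error[of "c j" l]] by simp
  ultimately show ?thesis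
    unfolding eps_optimal_def \<epsilon>_def[symmetric] by blast
qed

end
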